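(* Let $T$ be a compact interval in $\mathbb R^k$ and let $p>0$ satisfy $\alpha p<k$. Then there exists a finite constant $C$ such that for all convex subsets $F\subset T$, all $n\ge1$ and all $y^1,\dots,y^n\in F$, $$\int_F\frac{dy}{\big(\sum_{\ell=1}^k\min_{1\le i\le n}|y_\ell-y^i_\ell|^2\big)^{\alpha p/2}}\le Cn^{\alpha p}[\lambda_k(F)]^{1-\frac{\alpha p}{k}}.$$
   Context: $\alpha\in(0,1)$ is a fixed constant (in the paper $\alpha=\frac{2H+1-N+\beta}{2}$ with $H\in[1/2,1)$ and $N-2H-1<\beta<N-2H+1$). For $y\in\mathbb R^k$, $y_\ell$ denotes its $\ell$-th coordinate; $\lambda_k$ is Lebesgue measure on $\mathbb R^k$. *)

theory Defs
  imports "HOL-Analysis.Analysis"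
begin

end

theory Submission
  imports Defs
begin

(* Write g(y) = (SUM l. MIN i. |y_l - y^i_l|^2). If g(y) <= r^2, then every coordinate y_l is within
   r of some y^(sigma l)_l, so y lies in one of the n^k cubes of half-side r centred at the grid points
   (y^(sigma 1)_1, ..., y^(sigma k)_k); hence {g <= r^2} has measure at most (2 n r)^k. Cutting F into
   the dyadic layers r0/2^(j+1) < sqrt g <= r0/2^j bounds the integral by r0^(-alpha p) lambda(F) plus a
   geometric series with ratio 2^(alpha p - k) < 1, and the choice 2 n r0 = lambda(F)^(1/k) makes both
   terms of order n^(alpha p) lambda(F)^(1 - alpha p/k). Convexity and boundedness of F only serve to
   make F measurable with finite measure. *)

lemma emeasure_lebesgue_cube_cart:
  fixes c :: "real ^ 'k"
  assumes "0 \<le> r"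
  shows "emeasure lebesgue (cbox (c - (\<chi> l. r)) (c + (\<chi> l. r))) = ennreal ((2 * r) ^ CARD('k))"
proof -
  have "\<And>b. b \<in> (Basis :: (real ^ 'k) set) \<Longrightarrow> (c + (\<chi> l. r) - (c - (\<chi> l. r))) \<bullet> b = 2 * r"
    "\<And>b. b \<in> (Basis :: (real ^ 'k) set) \<Longrightarrow> (c - (\<chi> l. r)) \<bullet> b \<le> (c + (\<chi> l. r)) \<bullet> b"
    using assms by (auto simp: Basis_vec_def inner_axis)
  then show ?thesis
    by (simp add: emeasure_lborel_cbox_eq)
qed

definition grid_cubes :: "('i \<Rightarrow> real ^ 'k) \<Rightarrow> 'i set \<Rightarrow> real \<Rightarrow> (real ^ 'k) set" where
  "grid_cubes ys I r =
     (\<Union>\<sigma>\<in>UNIV \<rightarrow>\<^sub>E I. cbox ((\<chi> l. ys (\<sigma> l) $ l) - (\<chi> l. r)) ((\<chi> l. ys (\<sigma> l) $ l) + (\<chi> l. r)))"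

lemma sets_grid_cubes:
  assumes "finite I"
  shows "grid_cubes ys I r \<in> sets lebesgue"
  unfolding grid_cubes_def using assms by (intro sets.finite_UN) (auto simp: finite_PiE)

lemma emeasure_grid_cubes_le:
  fixes ys :: "'i \<Rightarrow> real ^ 'k"
  assumes "finite I" "0 \<le> r"
  shows "emeasure lebesgue (grid_cubes ys I r) \<le> ennreal ((2 * real (card I) * r) ^ CARD('k))"
proof -
  let ?cube = "\<lambda>\<sigma>. cbox ((\<chi> l. ys (\<sigma> l) $ l) - (\<chi> l. r)) ((\<chi> l. ys (\<sigma> l) $ l) + (\<chi> l. r))"
  have "emeasure lebesgue (grid_cubes ys I r) \<le> (\<Sum>\<sigma>\<in>UNIV \<rightarrow>\<^sub>E I. emeasure lebesgue (?cube \<sigma>))"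
    unfolding grid_cubes_def using assms by (intro emeasure_subadditive_finite) (auto simp: finite_PiE)
  also have "\<dots> = (\<Sum>\<sigma>\<in>(UNIV :: 'k set) \<rightarrow>\<^sub>E I. ennreal ((2 * r) ^ CARD('k)))"
    by (rule sum.cong[OF refl emeasure_lebesgue_cube_cart[OF assms(2)]])
  also have "\<dots> = ennreal ((2 * real (card I) * r) ^ CARD('k))"
    using assms
    by (simp add: card_PiE ennreal_of_nat_eq_real_of_nat ennreal_mult' power_mult_distrib mult_ac)
  finally show ?thesis .
qed

lemma Min_coordinate_dist_le_imp_in_grid_cubes:
  fixes y :: "real ^ 'k" and ys :: "'i \<Rightarrow> real ^ 'k"
  assumes I: "finite I" "I \<noteq> {}" and r: "0 \<le> r"
    and le: "(\<Sum>l\<in>UNIV. Min ((\<lambda>i. \<bar>y $ l - ys i $ l\<bar> ^ 2) ` I)) \<le> r\<^sup>2"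
  shows "y \<in> grid_cubes ys I r"
proof -
  have "\<exists>i\<in>I. \<bar>y $ l - ys i $ l\<bar> \<le> r" for l
  proof -
    have "Min ((\<lambda>i. \<bar>y $ l - ys i $ l\<bar> ^ 2) ` I) \<in> (\<lambda>i. \<bar>y $ l - ys i $ l\<bar> ^ 2) ` I"
      using I by (intro Min_in) auto
    then obtain i where i: "i \<in> I" "Min ((\<lambda>i. \<bar>y $ l - ys i $ l\<bar> ^ 2) ` I) = \<bar>y $ l - ys i $ l\<bar> ^ 2"
      by blast
    have "Min ((\<lambda>i. \<bar>y $ l - ys i $ l\<bar> ^ 2) ` I) \<le> r\<^sup>2"
      using I by (intro order_trans[OF member_le_sum le]) auto
    then show ?thesis
      using i r by (fastforce simp: power2_le_iff_abs_le)
  qed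
  then obtain \<sigma> where \<sigma>: "\<And>l. \<sigma> l \<in> I \<and> \<bar>y $ l - ys (\<sigma> l) $ l\<bar> \<le> r"
    by metis
  then have "\<sigma> \<in> UNIV \<rightarrow>\<^sub>E I"
    by (simp add: PiE_UNIV_domain)
  moreover have "y \<in> cbox ((\<chi> l. ys (\<sigma> l) $ l) - (\<chi> l. r)) ((\<chi> l. ys (\<sigma> l) $ l) + (\<chi> l. r))"
    using \<sigma> by (simp add: mem_box_cart abs_le_iff) (smt (verit))
  ultimately show ?thesis
    unfolding grid_cubes_def by blast
qed

lemma powr_neg_le_dyadic_sum:
  fixes t s r0 :: real
  assumes "0 < s" "0 < r0" "0 \<le> t"
    and cover: "\<And>j. 0 < t \<Longrightarrow> t \<le> r0 / 2 ^ j \<Longrightarrow> x \<in> U j"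
  shows "ennreal (t powr - s)
           \<le> ennreal (r0 powr - s) + (\<Sum>j. ennreal ((r0 / 2 ^ Suc j) powr - s) * indicator (U j) x)"
proof -
  consider "t = 0" | "r0 \<le> t" | "0 < t" "t < r0"
    using assms(3) by linarith
  then show ?thesis
  proof cases
    case 1
    (* 0 powr - s = 0: the integrand is given the value 0 at its singularities *)
    then show ?thesis
      by (simp only: powr_0 ennreal_0 zero_le)
  next
    case 2
    then have "t powr - s \<le> r0 powr - s"
      using assms by (intro powr_mono2') auto
    then have "ennreal (t powr - s) \<le> ennreal (r0 powr - s)"
      by (rule ennreal_leI)
    then show ?thesis
      by (rule add_increasing2[OF zero_le])
  next
    case 3
    define J where "J = nat \<lfloor>log 2 (r0 / t)\<rfloor>"
    have "\<lfloor>log 2 (r0 / t)\<rfloor> \<ge> 0"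
      using 3 by simp
    then have "real J = \<lfloor>log 2 (r0 / t)\<rfloor>"
      unfolding J_def by simp
    then have "2 powr J \<le> r0 / t \<and> r0 / t < 2 powr (J + 1)"
      using floor_log_eq_powr_iff[of "r0 / t" 2 "\<lfloor>log 2 (r0 / t)\<rfloor>"] 3 by (simp add: add.commute)
    then have J: "t \<le> r0 / 2 ^ J" "r0 / 2 ^ Suc J < t"
      using 3 by (auto simp: powr_realpow field_simps powr_add)
    have "x \<in> U J"
      using cover J(1) 3 by blast
    have "ennreal (t powr - s) \<le> ennreal ((r0 / 2 ^ Suc J) powr - s)"
      using J assms by (intro ennreal_leI powr_mono2') auto
    also have "\<dots> = ennreal ((r0 / 2 ^ Suc J) powr - s) * indicator (U J) x"
      using \<open>x \<in> U J\<close> by simp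
    also have "\<dots> \<le> (\<Sum>j. ennreal ((r0 / 2 ^ Suc j) powr - s) * indicator (U j) x)"
      using sum_le_suminf[OF summableI, of "{J}" "\<lambda>j. ennreal ((r0 / 2 ^ Suc j) powr - s) * indicator (U j) x"]
      by (simp only: finite.intros sum.insert empty_iff not_False_eq_True sum.empty add_0_right zero_le)
    finally show ?thesis
      by (rule add_increasing[OF zero_le])
  qed
qed

lemma nn_integral_powr_neg_le_dyadic:
  fixes t :: "'a \<Rightarrow> real"
  assumes "0 < s" "0 < r0" and F: "F \<in> sets M" and U: "\<And>j. U j \<in> sets M"
    and t: "\<And>y. y \<in> F \<Longrightarrow> 0 \<le> t y"
    and cover: "\<And>y j. y \<in> F \<Longrightarrow> 0 < t y \<Longrightarrow> t y \<le> r0 / 2 ^ j \<Longrightarrow> y \<in> U j"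
  shows "(\<integral>\<^sup>+ y \<in> F. ennreal (t y powr - s) \<partial>M)
           \<le> ennreal (r0 powr - s) * emeasure M F + (\<Sum>j. ennreal ((r0 / 2 ^ Suc j) powr - s) * emeasure M (U j))"
proof -
  have "(\<integral>\<^sup>+ y \<in> F. ennreal (t y powr - s) \<partial>M)
      \<le> (\<integral>\<^sup>+ y. ennreal (r0 powr - s) * indicator F y
                 + (\<Sum>j. ennreal ((r0 / 2 ^ Suc j) powr - s) * indicator (U j) y) \<partial>M)"
  proof (rule nn_integral_mono)
    fix y
    show "ennreal (t y powr - s) * indicator F y
        \<le> ennreal (r0 powr - s) * indicator F y
          + (\<Sum>j. ennreal ((r0 / 2 ^ Suc j) powr - s) * indicator (U j) y)"
      using powr_neg_le_dyadic_sum[OF assms(1,2) t cover] by (cases "y \<in> F") auto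
  qed
  also have "\<dots> = ennreal (r0 powr - s) * emeasure M F + (\<Sum>j. ennreal ((r0 / 2 ^ Suc j) powr - s) * emeasure M (U j))"
    using F U by (simp add: nn_integral_add nn_integral_suminf nn_integral_cmult_indicator)
  finally show ?thesis .
qed

lemma two_powr_div_two_pow_less_one:
  assumes "s < real K"
  shows "2 powr s / 2 ^ K < 1"
proof -
  have "2 powr s < 2 powr real K"
    using assms by (intro powr_less_mono) auto
  then show ?thesis
    by (simp add: powr_realpow)
qed

lemma dyadic_layers_sums:
  fixes r0 s B :: real
  assumes "0 < r0" "s < real K"
  shows "(\<lambda>j. (r0 / 2 ^ Suc j) powr - s * (B * (r0 / 2 ^ j) ^ K))
           sums (2 powr s * B * r0 ^ K * r0 powr - s / (1 - 2 powr s / 2 ^ K))"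
proof -
  define q where "q = 2 powr s / 2 ^ K"
  have q: "0 \<le> q" "q < 1"
    unfolding q_def using two_powr_div_two_pow_less_one[OF assms(2)] by simp_all
  have layer: "(r0 / 2 ^ Suc j) powr - s * (B * (r0 / 2 ^ j) ^ K) = (2 powr s * B * r0 ^ K * r0 powr - s) * q ^ j"
    for j
  proof -
    have "(r0 / 2 ^ Suc j) powr - s = r0 powr - s / (2 ^ Suc j) powr - s"
      by (rule powr_divide)
    also have "\<dots> = r0 powr - s * (2 powr real (Suc j)) powr s"
      by (simp only: powr_realpow[of 2, simplified] powr_minus divide_inverse inverse_inverse_eq)
    also have "\<dots> = r0 powr - s * (2 powr s) ^ Suc j"
      by (simp only: powr_powr powr_power[of 2, simplified] mult.commute)
    finally have "(r0 / 2 ^ Suc j) powr - s = r0 powr - s * (2 powr s) ^ Suc j" .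
    then show ?thesis
      unfolding q_def by (simp add: power_divide mult_ac flip: power_mult)
  qed
  show ?thesis
    unfolding layer q_def[symmetric] using sums_mult[OF geometric_sums, of q] q by simp
qed

lemma nn_integral_powr_neg_le_power_growth:
  fixes t :: "'a \<Rightarrow> real" and K :: nat
  assumes s: "0 < s" "s < real K" and r0: "0 < r0" and B: "0 \<le> B"
    and F: "F \<in> sets M" and U: "\<And>j. U j \<in> sets M"
    and t: "\<And>y. y \<in> F \<Longrightarrow> 0 \<le> t y"
    and cover: "\<And>y j. y \<in> F \<Longrightarrow> 0 < t y \<Longrightarrow> t y \<le> r0 / 2 ^ j \<Longrightarrow> y \<in> U j"
    and growth: "\<And>j. emeasure M (U j) \<le> ennreal (B * (r0 / 2 ^ j) ^ K)"
  shows "(\<integral>\<^sup>+ y \<in> F. ennreal (t y powr - s) \<partial>M)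
           \<le> ennreal (r0 powr - s) * emeasure M F
             + ennreal (2 powr s * B * r0 ^ K * r0 powr - s / (1 - 2 powr s / 2 ^ K))"
proof -
  have "(\<Sum>j. ennreal ((r0 / 2 ^ Suc j) powr - s) * emeasure M (U j))
      \<le> (\<Sum>j. ennreal ((r0 / 2 ^ Suc j) powr - s * (B * (r0 / 2 ^ j) ^ K)))"
    using mult_left_mono[OF growth] by (intro suminf_le) (simp_all add: ennreal_mult')
  also have "\<dots> = ennreal (2 powr s * B * r0 ^ K * r0 powr - s / (1 - 2 powr s / 2 ^ K))"
    using dyadic_layers_sums[OF r0 s(2), of B] r0 B by (intro suminf_ennreal_eq) auto
  finally show ?thesis
    by (intro order_trans[OF nn_integral_powr_neg_le_dyadic[OF s(1) r0 F U t cover]] add_left_mono)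
qed

lemma dyadic_bound_at_optimal_radius:
  fixes V N s :: real and K :: nat
  assumes V: "0 < V" and N: "0 < N" and K: "0 < K"
  defines "r0 \<equiv> V powr (1 / K) / (2 * N)"
  shows "r0 powr - s * V + 2 powr s * (2 * N) ^ K * r0 ^ K * r0 powr - s / (1 - 2 powr s / 2 ^ K)
           = 2 powr s * (1 + 2 powr s / (1 - 2 powr s / 2 ^ K)) * N powr s * V powr (1 - s / K)"
proof -
  have VK: "(2 * N) ^ K * r0 ^ K = V"
    unfolding r0_def power_mult_distrib[symmetric] using assms
    by (simp add: powr_power[symmetric] powr_powr flip: powr_realpow)
  have "r0 powr - s = (V powr (1 / K)) powr - s * (2 * N) powr s"
    unfolding r0_def powr_divide by (simp add: powr_minus divide_inverse)
  also have "\<dots> = 2 powr s * N powr s * V powr (- s / K)"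
    using N by (simp add: powr_powr powr_mult)
  finally have "r0 powr - s * V = 2 powr s * N powr s * (V powr (- s / K) * V)"
    by (simp only: mult.assoc)
  also have "V powr (- s / K) * V = V powr (1 - s / K)"
    using V by (simp add: powr_diff powr_minus divide_inverse)
  finally have E: "r0 powr - s * V = 2 powr s * N powr s * V powr (1 - s / K)" .
  have "2 powr s * (2 * N) ^ K * r0 ^ K * r0 powr - s / (1 - 2 powr s / 2 ^ K)
      = r0 powr - s * V * (2 powr s / (1 - 2 powr s / 2 ^ K))"
    unfolding VK[symmetric] by (simp add: field_simps)
  then show ?thesis
    unfolding E by (simp add: algebra_simps)
qed

lemma nn_integral_Min_coordinate_dist_powr_le_radius:
  fixes s r0 :: real and F :: "(real ^ 'k) set" and ys :: "'i \<Rightarrow> real ^ 'k"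
  assumes s: "0 < s" "s < real CARD('k)" and r0: "0 < r0"
    and F: "F \<in> sets lebesgue" and I: "finite I" "I \<noteq> {}"
  shows "(\<integral>\<^sup>+ y \<in> F. ennreal ((\<Sum>l\<in>UNIV. Min ((\<lambda>i. \<bar>y $ l - ys i $ l\<bar> ^ 2) ` I)) powr - (s / 2)) \<partial>lebesgue)
    \<le> ennreal (r0 powr - s) * emeasure lebesgue F
      + ennreal (2 powr s * (2 * real (card I)) ^ CARD('k) * r0 ^ CARD('k) * r0 powr - s
                 / (1 - 2 powr s / 2 ^ CARD('k)))"
proof -
  define g where "g y = (\<Sum>l\<in>UNIV. Min ((\<lambda>i. \<bar>y $ l - ys i $ l\<bar> ^ 2) ` I))" for y :: "real ^ 'k"
  define U where "U j = grid_cubes ys I (r0 / 2 ^ j)" for j :: nat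
  have g: "0 \<le> g y" for y
    unfolding g_def using I by (intro sum_nonneg) (simp add: Min_ge_iff)
  have U: "U j \<in> sets lebesgue" for j
    unfolding U_def using I(1) by (rule sets_grid_cubes)
  have cover: "y \<in> U j" if "sqrt (g y) \<le> r0 / 2 ^ j" for y j
  proof -
    have "(sqrt (g y))\<^sup>2 \<le> (r0 / 2 ^ j)\<^sup>2"
      using that g by (intro power_mono) auto
    then show ?thesis
      unfolding U_def using Min_coordinate_dist_le_imp_in_grid_cubes[OF I, of "r0 / 2 ^ j" y ys] r0 g
      by (simp add: g_def)
  qed
  have growth: "emeasure lebesgue (U j) \<le> ennreal ((2 * real (card I)) ^ CARD('k) * (r0 / 2 ^ j) ^ CARD('k))"
    for j
    using emeasure_grid_cubes_le[OF I(1), of "r0 / 2 ^ j" ys] r0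
    unfolding U_def by (simp add: power_mult_distrib power_divide mult_ac)
  have "(\<integral>\<^sup>+ y \<in> F. ennreal (g y powr - (s / 2)) \<partial>lebesgue)
      = (\<integral>\<^sup>+ y \<in> F. ennreal (sqrt (g y) powr - s) \<partial>lebesgue)"
    using g by (simp add: powr_half_sqrt[symmetric] powr_powr)
  also have "\<dots> \<le> ennreal (r0 powr - s) * emeasure lebesgue F
      + ennreal (2 powr s * (2 * real (card I)) ^ CARD('k) * r0 ^ CARD('k) * r0 powr - s
                 / (1 - 2 powr s / 2 ^ CARD('k)))"
    by (rule nn_integral_powr_neg_le_power_growth[OF s r0 _ F U]) (use g cover growth in auto)
  finally show ?thesis
    unfolding g_def .
qed

lemma nn_integral_Min_coordinate_dist_powr_le:
  fixes s :: real and F :: "(real ^ 'k) set" and ys :: "'i \<Rightarrow> real ^ 'k"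
  assumes s: "0 < s" "s < real CARD('k)" and F: "F \<in> lmeasurable" and I: "finite I" "I \<noteq> {}"
  shows "(\<integral>\<^sup>+ y \<in> F. ennreal ((\<Sum>l\<in>UNIV. Min ((\<lambda>i. \<bar>y $ l - ys i $ l\<bar> ^ 2) ` I)) powr - (s / 2)) \<partial>lebesgue)
    \<le> ennreal (2 powr s * (1 + 2 powr s / (1 - 2 powr s / 2 ^ CARD('k))) * real (card I) powr s
                * measure lebesgue F powr (1 - s / real CARD('k)))"
proof -
  define K where "K = CARD('k)"
  define N where "N = real (card I)"
  define V where "V = measure lebesgue F"
  have K: "0 < K" and N: "0 < N"
    using I by (simp_all add: K_def N_def card_gt_0_iff)
  have emF: "emeasure lebesgue F = ennreal V"
    unfolding V_def using F by (simp add: emeasure_eq_measure2)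
  consider "V = 0" | "0 < V"
    using measure_nonneg[of lebesgue F] unfolding V_def by linarith
  then show ?thesis
  proof cases
    case 1
    then have "F \<in> null_sets lebesgue"
      using F emF by (simp add: null_sets_def fmeasurableD)
    then show ?thesis
      by (simp add: nn_integral_null_set)
  next
    case 2
    define r0 where "r0 = V powr (1 / K) / (2 * N)"
    have r0: "0 < r0"
      unfolding r0_def using 2 N by simp
    have "(\<integral>\<^sup>+ y \<in> F. ennreal ((\<Sum>l\<in>UNIV. Min ((\<lambda>i. \<bar>y $ l - ys i $ l\<bar> ^ 2) ` I)) powr - (s / 2)) \<partial>lebesgue)
        \<le> ennreal (r0 powr - s) * emeasure lebesgue F
          + ennreal (2 powr s * (2 * N) ^ K * r0 ^ K * r0 powr - s / (1 - 2 powr s / 2 ^ K))"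
      using nn_integral_Min_coordinate_dist_powr_le_radius[OF s r0 fmeasurableD[OF F] I]
      unfolding K_def N_def .
    also have "\<dots> = ennreal (r0 powr - s * V + 2 powr s * (2 * N) ^ K * r0 ^ K * r0 powr - s / (1 - 2 powr s / 2 ^ K))"
      using 2 N r0 two_powr_div_two_pow_less_one[OF s(2)] unfolding emF K_def
      by (subst ennreal_plus) (simp_all add: ennreal_mult)
    also have "\<dots> = ennreal (2 powr s * (1 + 2 powr s / (1 - 2 powr s / 2 ^ K)) * N powr s * V powr (1 - s / K))"
      unfolding r0_def dyadic_bound_at_optimal_radius[OF 2 N K] ..
    finally show ?thesis
      unfolding K_def N_def V_def .
  qed
qed

theorem lemma4p3:
  fixes \<alpha> p :: real and a b :: "real ^ 'k"
  assumes "0 < \<alpha>" "\<alpha> < 1"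
    and "0 < p" "\<alpha> * p < real CARD('k)"
  shows "\<exists>C::real. \<forall>F n (ys :: nat \<Rightarrow> real ^ 'k).
      F \<subseteq> cbox a b \<longrightarrow> convex F \<longrightarrow> 1 \<le> n \<longrightarrow> (\<forall>i\<in>{1..n}. ys i \<in> F) \<longrightarrow>
      (\<integral>\<^sup>+ y \<in> F. ennreal ((\<Sum>l\<in>UNIV. Min ((\<lambda>i. \<bar>y $ l - ys i $ l\<bar> ^ 2) ` {1..n}))
                                 powr (- (\<alpha> * p / 2))) \<partial>lebesgue)
        \<le> ennreal (C * real n powr (\<alpha> * p) * measure lebesgue F powr (1 - \<alpha> * p / real CARD('k)))"
proof (intro exI allI impI)
  fix F :: "(real ^ 'k) set" and n :: nat and ys :: "nat \<Rightarrow> real ^ 'k"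
  assume "F \<subseteq> cbox a b" "convex F" "1 \<le> n"
  then have "F \<in> lmeasurable"
    by (meson bounded_cbox bounded_subset measurable_convex)
  moreover have "0 < \<alpha> * p"
    using assms by simp
  ultimately show "(\<integral>\<^sup>+ y \<in> F. ennreal ((\<Sum>l\<in>UNIV. Min ((\<lambda>i. \<bar>y $ l - ys i $ l\<bar> ^ 2) ` {1..n}))
                                 powr (- (\<alpha> * p / 2))) \<partial>lebesgue)
      \<le> ennreal (2 powr (\<alpha> * p) * (1 + 2 powr (\<alpha> * p) / (1 - 2 powr (\<alpha> * p) / 2 ^ CARD('k)))
                  * real n powr (\<alpha> * p) * measure lebesgue F powr (1 - \<alpha> * p / real CARD('k)))"
    using nn_integral_Min_coordinate_dist_powr_le[of "\<alpha> * p" F "{1..n}" ys] assms(4) \<open>1 \<le> n\<close>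
    by simp
qed

end
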